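(* Fix $k\in\mathbb{N}$ and positive constants $b_0,b_1,b_2,\lambda_0,\lambda_1$. There exists $C>0$ depending only on $b_0,b_1,\lambda_0,\lambda_1$ (and the fixed $k$) such that the following holds. Let $T\geq10$, $\ell<r$, $a^\pm\in\mathbb{R}^k$, $g:[\ell,r]\to\mathbb{R}$ Lipschitz with $g(\ell)=g(r)=0$, and $P\subset(\ell,r)$ finite, with $P'=P\cap[\ell+T^{1/2},r-T^{1/2}]$ non-empty. Suppose that $r-\ell\leq b_0T$, $|P|\leq b_0T$, $|g(x)-g(y)|\leq b_1T|x-y|$ for all $x,y$, $a^\pm_j-a^\pm_{j+1}\geq\lambda_0T^{1/2}$ for $j\in\{1,\dots,k-1\}$, $a^-_k-g(\ell)\geq\lambda_1T$, $a^+_k-g(r)\geq\lambda_1T$, $a^-_1-g(\ell)\leq b_2T^2$, $a^+_1-g(r)\leq b_2T^2$. Then $\mathbb{E}_{\mathcal{L}'}[W'_+]\geq C^{-1}e^{-CT}$.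
   Context: $\mathbb{P}_{\mathrm{free}}$ is the law of $k$ independent Brownian bridges (diffusion parameter one) $\mathcal{L}=(\mathcal{L}_1,\dots,\mathcal{L}_k)$ on $[\ell,r]$ with $\mathcal{L}_j(\ell)=a^-_j$, $\mathcal{L}_j(r)=a^+_j$. $W'(\mathcal{L})=1$ if $\mathcal{L}_j(p)>g(p)$ for all $p\in P'$ and $j\in\{1,\dots,k\}$, and $0$ otherwise; $\mathbb{P}_{\mathcal{L}'}$ (expectation $\mathbb{E}_{\mathcal{L}'}$) is given by $d\mathbb{P}_{\mathcal{L}'}/d\mathbb{P}_{\mathrm{free}}=W'/\mathbb{E}_{\mathrm{free}}[W']$. $W'_+(\mathcal{L})=1$ if for all $p\in P'$ one has $\mathcal{L}_k(p)>g(p)$ and $\mathcal{L}_j(p)>\mathcal{L}_{j+1}(p)$ for all $j\in\{1,\dots,k-1\}$, and $W'_+(\mathcal{L})=0$ otherwise. *)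

theory Defs
  imports "HOL-Analysis.Analysis"
begin

definition heat :: "real \<Rightarrow> real \<Rightarrow> real \<Rightarrow> real" where
  "heat t x y = exp (- ((y - x)^2) / (2 * t)) / sqrt (2 * pi * t)"

text \<open>Joint density of the values at the sorted times ps (inside (l,r)) of k independent
  Brownian bridges, curve j (0-based, j<k) going from am j at time l to ap j at time r.
  A configuration x maps (j, p) to the value of curve j at time p.\<close>
definition bb_dens :: "nat \<Rightarrow> real \<Rightarrow> real \<Rightarrow> (nat \<Rightarrow> real) \<Rightarrow> (nat \<Rightarrow> real)
    \<Rightarrow> real list \<Rightarrow> (nat \<times> real \<Rightarrow> real) \<Rightarrow> real" where
  "bb_dens k l r am ap ps x =
     (\<Prod>j<k. (let ts = [l] @ ps @ [r];
                 vs = [am j] @ map (\<lambda>p. x (j, p)) ps @ [ap j]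
             in (\<Prod>i<length ps + 1. heat (ts ! Suc i - ts ! i) (vs ! i) (vs ! Suc i))
                / heat (r - l) (am j) (ap j)))"

text \<open>Expectation under P_free of an observable F depending only on the values of the
  k curves at the finitely many times in Q (finite-dimensional marginal of the bridges).\<close>
definition E_free :: "nat \<Rightarrow> real \<Rightarrow> real \<Rightarrow> (nat \<Rightarrow> real) \<Rightarrow> (nat \<Rightarrow> real) \<Rightarrow> real set
    \<Rightarrow> ((nat \<times> real \<Rightarrow> real) \<Rightarrow> real) \<Rightarrow> ennreal" where
  "E_free k l r am ap Q F =
     (\<integral>\<^sup>+ x. ennreal (F x * bb_dens k l r am ap (sorted_list_of_set Q) x)
        \<partial>(PiM ({0..<k} \<times> Q) (\<lambda>_. lborel)))"

definition Wp :: "nat \<Rightarrow> (real \<Rightarrow> real) \<Rightarrow> real set \<Rightarrow> (nat \<times> real \<Rightarrow> real) \<Rightarrow> real" where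
  "Wp k g Q x = (if (\<forall>p\<in>Q. \<forall>j<k. g p < x (j, p)) then 1 else 0)"

definition Wplus :: "nat \<Rightarrow> (real \<Rightarrow> real) \<Rightarrow> real set \<Rightarrow> (nat \<times> real \<Rightarrow> real) \<Rightarrow> real" where
  "Wplus k g Q x = (if (\<forall>p\<in>Q. g p < x (k - 1, p) \<and>
        (\<forall>j. j + 1 < k \<longrightarrow> x (j + 1, p) < x (j, p))) then 1 else 0)"

text \<open>Expectation under P_{L'}: dP_{L'}/dP_free = W' / E_free[W'].\<close>
definition E_L :: "nat \<Rightarrow> real \<Rightarrow> real \<Rightarrow> (nat \<Rightarrow> real) \<Rightarrow> (nat \<Rightarrow> real) \<Rightarrow> (real \<Rightarrow> real)
    \<Rightarrow> real set \<Rightarrow> ((nat \<times> real \<Rightarrow> real) \<Rightarrow> real) \<Rightarrow> real" where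
  "E_L k l r am ap g Q F =
     enn2real (E_free k l r am ap Q (\<lambda>x. F x * Wp k g Q x))
     / enn2real (E_free k l r am ap Q (Wp k g Q))"

end

theory Submission
  imports Defs "HOL-Probability.Probability"
begin

text \<open>
  At each time of \<open>P'\<close> the values of the \<open>k\<close> curves are almost surely distinct, so every
  configuration with \<open>W' = 1\<close> is carried into \<open>{W'\<^sub>+ = 1}\<close> by one of the \<open>(k!)^|P'|\<close> maps that
  permute the curve labels separately at each time. These maps preserve Lebesgue measure, and
  they do not decrease the free density: the density is a product, over consecutive times, of
  Gaussian kernels in the increments, the boundary values \<open>a\<^sup>\<plusminus>\<close> are already ordered, and
  sorting the values at two consecutive times decreases the sum of squared increments by the
  rearrangement inequality. Hence \<open>E_free[W'] \<le> (k!)^|P'| E_free[W'\<^sub>+]\<close>, that is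
  \<open>E_L'[W'\<^sub>+] \<ge> (k!)^-|P'| \<ge> exp (- b\<^sub>0 log (k!) T)\<close>.
\<close>

section \<open>Rearrangement\<close>

lemma antimono_on_lessThanI:
  fixes f :: "nat \<Rightarrow> 'a::order"
  assumes "\<And>j. Suc j < k \<Longrightarrow> f (Suc j) \<le> f j"
  shows "antimono_on {..<k} f"
proof (rule monotone_onI)
  fix i j assume "i \<in> {..<k}" "j \<in> {..<k}" "i \<le> j"
  show "f j \<le> f i"
    by (rule lift_Suc_antimono_le_ivl[of "{j. Suc j < k}"]) (use assms \<open>i \<le> j\<close> \<open>j \<in> {..<k}\<close> in auto)
qed

lemma sum_mult_swap_le:
  fixes u w :: "nat \<Rightarrow> 'a::linordered_idom"
  assumes "finite A" "s \<in> A" "k \<in> A" "s \<noteq> k"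
    and "\<gamma> s = k" "\<gamma> k = t" "\<gamma>' s = t" "\<gamma>' k = k" "\<And>m. m \<noteq> s \<Longrightarrow> m \<noteq> k \<Longrightarrow> \<gamma>' m = \<gamma> m"
    and "u k \<le> u s" "w k \<le> w t"
  shows "(\<Sum>m\<in>A. u m * w (\<gamma> m)) \<le> (\<Sum>m\<in>A. u m * w (\<gamma>' m))"
proof -
  have split: "(\<Sum>m\<in>A. f m) = f s + f k + (\<Sum>m\<in>A - {s, k}. f m)" for f :: "nat \<Rightarrow> 'a"
    using assms(1-4) by (subst sum.subset_diff[of "{s, k}"]) auto
  have "u s * w k + u k * w t \<le> u s * w t + u k * w k"
    using mult_mono[of 0 "u s - u k" 0 "w t - w k"] assms(10,11) by (simp add: algebra_simps)
  moreover have "(\<Sum>m\<in>A - {s, k}. u m * w (\<gamma>' m)) = (\<Sum>m\<in>A - {s, k}. u m * w (\<gamma> m))"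
    using assms(9) by (intro sum.cong) simp_all
  ultimately show ?thesis
    unfolding split[of "\<lambda>m. u m * w (\<gamma> m)"] split[of "\<lambda>m. u m * w (\<gamma>' m)"] assms(5-8)
    by linarith
qed

lemma rearrangement_inequality:
  fixes u w :: "nat \<Rightarrow> 'a::linordered_idom"
  assumes "antimono_on {..<k} u" "antimono_on {..<k} w" "\<gamma> permutes {..<k}"
  shows "(\<Sum>m<k. u m * w (\<gamma> m)) \<le> (\<Sum>m<k. u m * w m)"
  using assms
proof (induction k arbitrary: \<gamma>)
  case 0
  then show ?case by simp
next
  case (Suc k)
  define s where "s = inv \<gamma> k"
  define t where "t = \<gamma> k"
  define \<gamma>' where "\<gamma>' = Transposition.transpose t k \<circ> \<gamma>"
  have "\<gamma> s = k" "s < Suc k" "t < Suc k"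
    using permutes_inverses(1)[OF Suc.prems(3)] permutes_in_image[OF permutes_inv[OF Suc.prems(3)]]
      permutes_in_image[OF Suc.prems(3)]
    by (simp_all add: s_def t_def)
  have "\<gamma>' permutes {..<Suc k}"
    unfolding \<gamma>'_def using Suc.prems(3) \<open>t < Suc k\<close>
    by (simp add: permutes_compose permutes_swap_id)
  have "\<gamma>' k = k"
    by (simp add: \<gamma>'_def t_def)
  have "\<gamma>' permutes {..<k}"
    by (rule permutes_superset[OF \<open>\<gamma>' permutes {..<Suc k}\<close>]) (use \<open>\<gamma>' k = k\<close> in \<open>auto simp: less_Suc_eq\<close>)
  have "(\<Sum>m<Suc k. u m * w (\<gamma> m)) \<le> (\<Sum>m<Suc k. u m * w (\<gamma>' m))"
  proof (cases "s = k")
    case True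
    then show ?thesis using \<open>\<gamma> s = k\<close> by (simp add: \<gamma>'_def t_def)
  next
    case False
    have "\<gamma> m \<noteq> k" if "m \<noteq> s" for m
      using that \<open>\<gamma> s = k\<close> permutes_inj[OF Suc.prems(3)] by (metis injD)
    moreover have "\<gamma> m \<noteq> t" if "m \<noteq> k" for m
      using that permutes_inj[OF Suc.prems(3)] unfolding t_def by (metis injD)
    ultimately have same: "\<gamma>' m = \<gamma> m" if "m \<noteq> s" "m \<noteq> k" for m
      using that by (simp add: \<gamma>'_def transpose_def)
    have "u k \<le> u s" "w k \<le> w t"
      using Suc.prems(1,2) \<open>s < Suc k\<close> \<open>t < Suc k\<close> by (simp_all add: monotone_on_def)
    then show ?thesis
      using False \<open>\<gamma> s = k\<close> \<open>\<gamma>' k = k\<close> \<open>s < Suc k\<close> same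
      by (intro sum_mult_swap_le) (simp_all add: \<gamma>'_def t_def)
  qed
  also have "\<dots> = (\<Sum>m<k. u m * w (\<gamma>' m)) + u k * w k"
    using \<open>\<gamma>' k = k\<close> by simp
  also have "\<dots> \<le> (\<Sum>m<Suc k. u m * w m)"
    using Suc.IH[OF _ _ \<open>\<gamma>' permutes {..<k}\<close>] Suc.prems(1,2)
      monotone_on_subset[of "{..<Suc k}" _ _ _ "{..<k}"]
    by force
  finally show ?case .
qed

lemma sum_sq_diff_sorted_le:
  fixes a b :: "nat \<Rightarrow> real"
  assumes "\<alpha> permutes {..<k}" "\<beta> permutes {..<k}"
    and "antimono_on {..<k} (\<lambda>j. a (\<alpha> j))" "antimono_on {..<k} (\<lambda>j. b (\<beta> j))"
  shows "(\<Sum>j<k. (a (\<alpha> j) - b (\<beta> j))^2) \<le> (\<Sum>j<k. (a j - b j)^2)"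
proof -
  have reindex: "(\<Sum>j<k. f (\<sigma> j)) = (\<Sum>j<k. f j)" if "\<sigma> permutes {..<k}" for f :: "nat \<Rightarrow> real" and \<sigma>
    using sum.permute[OF that, of f] by (simp add: comp_def)
  have "(\<Sum>j<k. a j * b j) = (\<Sum>m<k. a (\<alpha> m) * b (\<alpha> m))"
    using reindex[OF assms(1), of "\<lambda>j. a j * b j"] by simp
  also have "\<dots> = (\<Sum>m<k. a (\<alpha> m) * b (\<beta> ((inv \<beta> \<circ> \<alpha>) m)))"
    using permutes_inverses(1)[OF assms(2)] by simp
  also have "\<dots> \<le> (\<Sum>m<k. a (\<alpha> m) * b (\<beta> m))"
    using rearrangement_inequality[OF assms(3,4), of "inv \<beta> \<circ> \<alpha>"] assms(1,2)
    by (simp add: permutes_compose permutes_inv)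
  finally have cross: "(\<Sum>j<k. a j * b j) \<le> (\<Sum>m<k. a (\<alpha> m) * b (\<beta> m))" .
  have "(x - y)^2 = x^2 + y^2 - 2 * (x * y)" for x y :: real
    by (simp add: power2_diff)
  then show ?thesis
    using cross reindex[OF assms(1), of "\<lambda>j. (a j)^2"] reindex[OF assms(2), of "\<lambda>j. (b j)^2"]
    by (simp add: sum.distrib sum_subtractf sum_distrib_left[symmetric])
qed

lemma sorting_permutation_exists:
  fixes f :: "nat \<Rightarrow> 'a::linorder"
  assumes "inj_on f {..<k}"
  obtains \<sigma> where "\<sigma> permutes {..<k}" "strict_antimono_on {..<k} (f \<circ> \<sigma>)"
proof -
  define xs where "xs = rev (sorted_list_of_set (f ` {..<k}))"
  have "distinct xs" "set xs = f ` {..<k}" "sorted_wrt (>) xs"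
    by (simp_all add: xs_def sorted_wrt_rev)
  moreover have "length xs = k"
    using distinct_card[OF \<open>distinct xs\<close>] \<open>set xs = f ` {..<k}\<close> card_image[OF assms] by simp
  ultimately have "bij_betw ((!) xs) {..<k} (f ` {..<k})"
    by (intro bij_betw_nth) auto
  then have bij: "bij_betw (the_inv_into {..<k} f \<circ> (!) xs) {..<k} {..<k}"
    using bij_betw_the_inv_into[OF inj_on_imp_bij_betw[OF assms]] by (rule bij_betw_trans)
  define \<sigma> where "\<sigma> i = (if i < k then the_inv_into {..<k} f (xs ! i) else i)" for i
  have \<sigma>_eq: "f (\<sigma> i) = xs ! i" if "i < k" for i
    using that \<open>length xs = k\<close> \<open>set xs = f ` {..<k}\<close> nth_mem[of i xs] f_the_inv_into_f[OF assms]
    by (simp add: \<sigma>_def)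
  have "\<sigma> permutes {..<k}"
    by (rule bij_imp_permutes) (use bij in \<open>auto simp: \<sigma>_def bij_betw_def inj_on_def image_def\<close>)
  moreover have "strict_antimono_on {..<k} (f \<circ> \<sigma>)"
    using sorted_wrt_nth_less[OF \<open>sorted_wrt (>) xs\<close>] \<open>length xs = k\<close>
    by (auto intro!: monotone_onI simp: \<sigma>_eq)
  ultimately show ?thesis using that by blast
qed

section \<open>Heat kernels and discrete Brownian paths\<close>

lemma heat_pos: "t > 0 \<Longrightarrow> heat t x y > 0"
  by (simp add: heat_def)

lemma heat_eq_normal_density: "t > 0 \<Longrightarrow> heat t x y = normal_density x (sqrt t) y"
  by (simp add: heat_def normal_density_def)

lemma nn_integral_heat: "t > 0 \<Longrightarrow> (\<integral>\<^sup>+ y. ennreal (heat t x y) \<partial>lborel) = 1"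
  by (simp add: heat_eq_normal_density nn_integral_eq_integral)

lemma borel_measurable_heat:
  assumes "f \<in> borel_measurable N" "g \<in> borel_measurable N"
  shows "(\<lambda>\<omega>. heat t (f \<omega>) (g \<omega>)) \<in> borel_measurable N"
  unfolding heat_def using assms by measurable

lemma prod_heat:
  assumes "finite J" "D > 0"
  shows "(\<Prod>j\<in>J. heat D (a j) (b j)) = exp (- (\<Sum>j\<in>J. (a j - b j)^2) / (2 * D)) / sqrt (2 * pi * D) ^ card J"
proof -
  have "(\<Prod>j\<in>J. heat D (a j) (b j)) = (\<Prod>j\<in>J. exp (- ((a j - b j)^2) / (2 * D))) / sqrt (2 * pi * D) ^ card J"
    unfolding heat_def prod_dividef by (simp add: power2_commute)
  also have "(\<Prod>j\<in>J. exp (- ((a j - b j)^2) / (2 * D))) = exp (- (\<Sum>j\<in>J. (a j - b j)^2) / (2 * D))"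
    using assms(1) by (simp add: exp_sum sum_negf[symmetric] sum_divide_distrib)
  finally show ?thesis .
qed

lemma prod_heat_antimono:
  assumes "finite J" "D > 0" "(\<Sum>j\<in>J. (a j - b j)^2) \<le> (\<Sum>j\<in>J. (a' j - b' j)^2)"
  shows "(\<Prod>j\<in>J. heat D (a' j) (b' j)) \<le> (\<Prod>j\<in>J. heat D (a j) (b j))"
  unfolding prod_heat[OF assms(1,2)] using assms
  by (intro divide_right_mono) (auto simp: divide_right_mono)

lemma sq_displacement_le_energy:
  fixes v t :: "nat \<Rightarrow> real"
  assumes "\<And>i. i < m \<Longrightarrow> t i < t (Suc i)"
  shows "(v m - v 0)^2 \<le> (t m - t 0) * (\<Sum>i<m. (v (Suc i) - v i)^2 / (t (Suc i) - t i))"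
proof -
  define dt where "dt i = t (Suc i) - t i" for i
  have "v m - v 0 = (\<Sum>i<m. sqrt (dt i) * ((v (Suc i) - v i) / sqrt (dt i)))"
    unfolding sum_lessThan_telescope[symmetric] using assms
    by (intro sum.cong) (auto simp: dt_def less_imp_neq[symmetric])
  then have "(v m - v 0)^2 \<le> (\<Sum>i<m. (sqrt (dt i))^2) * (\<Sum>i<m. ((v (Suc i) - v i) / sqrt (dt i))^2)"
    by (simp only: Cauchy_Schwarz_ineq_sum)
  also have "\<dots> = (t m - t 0) * (\<Sum>i<m. (v (Suc i) - v i)^2 / dt i)"
    using assms by (simp add: dt_def sum_lessThan_telescope power_divide less_imp_le)
  finally show ?thesis unfolding dt_def .
qed

lemma prod_heat_steps:
  "(\<Prod>i<m. heat (t (Suc i) - t i) (v i) (v (Suc i)))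
    = exp (- (\<Sum>i<m. (v (Suc i) - v i)^2 / (t (Suc i) - t i)) / 2)
      / (\<Prod>i<m. sqrt (2 * pi * (t (Suc i) - t i)))"
proof -
  have heat_eq: "heat D a b = exp (- ((b - a)^2 / D) / 2) / sqrt (2 * pi * D)" for D a b :: real
    by (simp add: heat_def divide_divide_eq_left mult.commute)
  have "(\<Prod>i<m. exp (- ((v (Suc i) - v i)^2 / (t (Suc i) - t i)) / 2))
      = exp (- (\<Sum>i<m. (v (Suc i) - v i)^2 / (t (Suc i) - t i)) / 2)"
    unfolding exp_sum[OF finite_lessThan, symmetric] sum_divide_distrib[symmetric] sum_negf ..
  then show ?thesis
    unfolding heat_eq prod_dividef by simp
qed

lemma sum_sq_displacement_le_energy:
  fixes t v :: "nat \<Rightarrow> real"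
  assumes t_step: "\<And>i. i \<le> n \<Longrightarrow> t i < t (Suc i)"
  shows "(\<Sum>i<n. (v 0 - v (Suc i))^2)
    \<le> real n * (t (Suc n) - t 0) * (\<Sum>i<n + 1. (v (Suc i) - v i)^2 / (t (Suc i) - t i))"
proof -
  define energy where "energy m = (\<Sum>i<m. (v (Suc i) - v i)^2 / (t (Suc i) - t i))" for m
  have t_le: "t i \<le> t (Suc n)" if "i \<le> Suc n" for i
    by (rule lift_Suc_mono_le_ivl[of "{..n}"]) (use t_step that in \<open>auto intro: less_imp_le\<close>)
  have energy_term_nonneg: "0 \<le> (v (Suc i) - v i)^2 / (t (Suc i) - t i)" if "i \<le> n" for i
    using t_step[OF that] by simp
  have energy_nonneg: "0 \<le> energy m" if "m \<le> n + 1" for m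
    unfolding energy_def using that energy_term_nonneg by (intro sum_nonneg) simp
  have energy_le: "energy m \<le> energy (n + 1)" if "m \<le> n + 1" for m
    unfolding energy_def using that energy_term_nonneg by (intro sum_mono2) auto
  have "(v 0 - v (Suc i))^2 \<le> (t (Suc n) - t 0) * energy (n + 1)" if "i < n" for i
  proof -
    have "(v (Suc i) - v 0)^2 \<le> (t (Suc i) - t 0) * energy (Suc i)"
      unfolding energy_def using that t_step by (intro sq_displacement_le_energy) simp
    also have "\<dots> \<le> (t (Suc n) - t 0) * energy (n + 1)"
      using that t_le[of "Suc i"] t_le[of 0] energy_le[of "Suc i"] energy_nonneg[of "Suc i"]
      by (intro mult_mono) simp_all
    finally show ?thesis
      by (simp add: power2_commute)
  qed
  then have "(\<Sum>i<n. (v 0 - v (Suc i))^2) \<le> (\<Sum>i<n. (t (Suc n) - t 0) * energy (n + 1))"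
    by (intro sum_mono) simp
  then show ?thesis
    by (simp add: energy_def)
qed

text \<open>A discrete Brownian path from \<open>v 0\<close> is dominated, up to a constant, by independent
  Gaussians centred at \<open>v 0\<close>: by Cauchy--Schwarz every displacement is controlled by the
  energy \<open>\<Sum> (\<Delta>v)\<^sup>2 / \<Delta>t\<close> of the path.\<close>

lemma prod_heat_chain_le:
  fixes t v :: "nat \<Rightarrow> real"
  assumes t_step: "\<And>i. i \<le> n \<Longrightarrow> t i < t (Suc i)" and "0 < n"
  defines "s \<equiv> real n * (t (Suc n) - t 0)"
  shows "(\<Prod>i<n + 1. heat (t (Suc i) - t i) (v i) (v (Suc i)))
    \<le> sqrt (2 * pi * s) ^ n / (\<Prod>i<n + 1. sqrt (2 * pi * (t (Suc i) - t i)))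
      * (\<Prod>i<n. heat s (v 0) (v (Suc i)))"
proof -
  define E where "E = (\<Sum>i<n + 1. (v (Suc i) - v i)^2 / (t (Suc i) - t i))"
  define Z where "Z = (\<Prod>i<n + 1. sqrt (2 * pi * (t (Suc i) - t i)))"
  have "Z > 0"
    unfolding Z_def using t_step by (intro prod_pos) simp
  have "t (Suc n) - t 0 = (\<Sum>i<n + 1. t (Suc i) - t i)"
    using sum_lessThan_telescope[of t "n + 1"] by simp
  also have "\<dots> > 0"
    using t_step by (intro sum_pos) auto
  finally have "s > 0"
    using \<open>0 < n\<close> by (simp add: s_def)
  have "(\<Sum>i<n. (v 0 - v (Suc i))^2) \<le> s * E"
    unfolding s_def E_def by (rule sum_sq_displacement_le_energy[of n t, OF t_step])
  then have "exp (- E / 2) \<le> exp (- (\<Sum>i<n. (v 0 - v (Suc i))^2) / (2 * s))"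
    using \<open>s > 0\<close> by (simp add: field_simps)
  then have "exp (- E / 2) / Z \<le> sqrt (2 * pi * s) ^ n / Z * (\<Prod>i<n. heat s (v 0) (v (Suc i)))"
    using \<open>Z > 0\<close> \<open>s > 0\<close> by (simp add: prod_heat divide_right_mono)
  then show ?thesis
    unfolding prod_heat_steps E_def Z_def .
qed

section \<open>Product Lebesgue measure\<close>

lemma vimage_restrict_reindex_PiE:
  assumes "bij_betw e I I" "\<And>i. i \<in> I \<Longrightarrow> A i \<subseteq> space N"
  shows "(\<lambda>x. \<lambda>i\<in>I. x (e i)) -` Pi\<^sub>E I A \<inter> space (PiM I (\<lambda>_. N)) = Pi\<^sub>E I (\<lambda>i. A (the_inv_into I e i))"
    (is "?L = Pi\<^sub>E I (\<lambda>i. A (?h i))")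
proof -
  have e_in: "e i \<in> I" and h_in: "?h i \<in> I" and e_h: "e (?h i) = i" and h_e: "?h (e i) = i"
    if "i \<in> I" for i
    using that assms(1) bij_betw_the_inv_into[OF assms(1)]
    by (auto simp: bij_betw_def f_the_inv_into_f the_inv_into_f_f)
  have "x \<in> ?L" if x: "x \<in> Pi\<^sub>E I (\<lambda>i. A (?h i))" for x
  proof -
    have "x \<in> space (PiM I (\<lambda>_. N))"
      using x assms(2) h_in unfolding space_PiM PiE_iff by blast
    moreover have "x (e i) \<in> A i" if "i \<in> I" for i
      using PiE_mem[OF x e_in[OF that]] h_e[OF that] by simp
    ultimately show ?thesis by simp
  qed
  moreover have "x \<in> Pi\<^sub>E I (\<lambda>i. A (?h i))" if x: "x \<in> ?L" for x
  proof (rule PiE_I)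
    show "x j \<in> A (?h j)" if "j \<in> I" for j
      using x PiE_mem[of "\<lambda>i\<in>I. x (e i)" I A "?h j"] h_in[OF that] e_h[OF that] by simp
    show "x j = undefined" if "j \<notin> I" for j
      using x that unfolding space_PiM by (blast intro: PiE_arb)
  qed
  ultimately show ?thesis
    by blast
qed

lemma distr_PiM_reindex_bij:
  assumes "sigma_finite_measure N" "finite I" "bij_betw e I I"
  shows "distr (PiM I (\<lambda>_. N)) (PiM I (\<lambda>_. N)) (\<lambda>x. \<lambda>i\<in>I. x (e i)) = PiM I (\<lambda>_. N)"
proof -
  interpret product_sigma_finite "\<lambda>_. N"
    using assms(1) by (simp add: product_sigma_finite_def)
  have meas: "(\<lambda>x. \<lambda>i\<in>I. x (e i)) \<in> PiM I (\<lambda>_. N) \<rightarrow>\<^sub>M PiM I (\<lambda>_. N)"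
    using bij_betwE[OF assms(3)] by (intro measurable_restrict) auto
  show ?thesis
  proof (rule PiM_eqI[OF assms(2)])
    fix A assume A: "\<And>i. i \<in> I \<Longrightarrow> A i \<in> sets N"
    have "emeasure (distr (PiM I (\<lambda>_. N)) (PiM I (\<lambda>_. N)) (\<lambda>x. \<lambda>i\<in>I. x (e i))) (Pi\<^sub>E I A)
        = emeasure (PiM I (\<lambda>_. N)) (Pi\<^sub>E I (\<lambda>i. A (the_inv_into I e i)))"
      using A assms(2,3) by (simp add: emeasure_distr meas sets_PiM_I_finite
          vimage_restrict_reindex_PiE sets.sets_into_space)
    also have "\<dots> = (\<Prod>i\<in>I. emeasure N (A (the_inv_into I e i)))"
      using A bij_betwE[OF bij_betw_the_inv_into[OF assms(3)]] by (simp add: emeasure_PiM assms(2))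
    also have "\<dots> = (\<Prod>i\<in>I. emeasure N (A i))"
      using prod.reindex_bij_betw[OF bij_betw_the_inv_into[OF assms(3)]] by simp
    finally show "emeasure (distr (PiM I (\<lambda>_. N)) (PiM I (\<lambda>_. N)) (\<lambda>x. \<lambda>i\<in>I. x (e i))) (Pi\<^sub>E I A)
        = (\<Prod>i\<in>I. emeasure N (A i))" .
  qed simp
qed

lemma nn_integral_PiM_reindex_bij:
  assumes "sigma_finite_measure N" "finite I" "bij_betw e I I" "f \<in> borel_measurable (PiM I (\<lambda>_. N))"
  shows "(\<integral>\<^sup>+ x. f (\<lambda>i\<in>I. x (e i)) \<partial>PiM I (\<lambda>_. N)) = (\<integral>\<^sup>+ x. f x \<partial>PiM I (\<lambda>_. N))"
proof -
  have "(\<integral>\<^sup>+ x. f x \<partial>PiM I (\<lambda>_. N))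
      = (\<integral>\<^sup>+ x. f x \<partial>distr (PiM I (\<lambda>_. N)) (PiM I (\<lambda>_. N)) (\<lambda>x. \<lambda>i\<in>I. x (e i)))"
    using assms(1-3) by (simp add: distr_PiM_reindex_bij)
  also have "\<dots> = (\<integral>\<^sup>+ x. f (\<lambda>i\<in>I. x (e i)) \<partial>PiM I (\<lambda>_. N))"
    using bij_betwE[OF assms(3)] assms(4)
    by (intro nn_integral_distr measurable_restrict) (auto simp: distr_PiM_reindex_bij assms(1-3))
  finally show ?thesis ..
qed

lemma AE_PiM_lborel_neq:
  fixes I :: "'i set"
  assumes "finite I" "i \<in> I" "j \<in> I" "i \<noteq> j"
  shows "AE x in PiM I (\<lambda>_. lborel :: real measure). x i \<noteq> x j"
proof -
  interpret product_sigma_finite "\<lambda>_ :: 'i. lborel :: real measure" ..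
  define J where "J = I - {i}"
  have I_eq: "I = insert i J" "i \<notin> J" "finite J" "j \<in> J"
    using assms by (auto simp: J_def)
  define ties where "ties = {x \<in> space (PiM I (\<lambda>_. lborel :: real measure)). x i = x j}"
  have ties_sets: "ties \<in> sets (PiM I (\<lambda>_. lborel))"
    unfolding ties_def using assms(2,3) by measurable
  have "emeasure (PiM I (\<lambda>_. lborel)) ties = (\<integral>\<^sup>+ x. indicator ties x \<partial>PiM I (\<lambda>_. lborel))"
    using ties_sets by simp
  also have "\<dots> = (\<integral>\<^sup>+ x. (\<integral>\<^sup>+ y. indicator ties (x(i := y)) \<partial>lborel) \<partial>PiM J (\<lambda>_. lborel))"
    using ties_sets unfolding I_eq(1)
    by (rule product_nn_integral_insert[OF I_eq(3,2) borel_measurable_indicator])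
  also have "\<dots> = (\<integral>\<^sup>+ x. 0 \<partial>PiM J (\<lambda>_. lborel :: real measure))"
  proof (rule nn_integral_cong)
    fix x assume x: "x \<in> space (PiM J (\<lambda>_. lborel :: real measure))"
    have "indicator ties (x(i := y)) = (indicator {x j} y :: ennreal)" for y
      using x I_eq assms(4) by (auto simp: ties_def indicator_def space_PiM PiE_iff extensional_def)
    then show "(\<integral>\<^sup>+ y. indicator ties (x(i := y)) \<partial>lborel) = 0"
      by simp
  qed
  finally have "ties \<in> null_sets (PiM I (\<lambda>_. lborel))"
    using ties_sets by (simp add: null_sets_def)
  then show ?thesis
    by (rule AE_I') (auto simp: ties_def)
qed

text \<open>Also for \<open>i \<notin> I\<close>, where \<open>x i = undefined\<close> on the whole space; this lets the
  \<open>measurable\<close> method handle coordinates without membership side conditions.\<close>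

lemma measurable_PiM_lborel_component:
  "(\<lambda>x. x i) \<in> borel_measurable (PiM I (\<lambda>_. lborel :: real measure))"
proof (cases "i \<in> I")
  case True
  then show ?thesis
    using measurable_component_singleton[of i I "\<lambda>_. lborel :: real measure"] by simp
next
  case False
  then have undef: "x i = undefined" if "x \<in> space (PiM I (\<lambda>_. lborel :: real measure))" for x
    using that by (auto simp: space_PiM PiE_def extensional_def)
  show ?thesis
    by (subst measurable_cong[where g = "\<lambda>_. undefined"]) (simp_all add: undef)
qed

section \<open>Finite-dimensional marginals of Brownian bridges\<close>

lemma Wplus_mult_Wp: "Wplus k g Q x * Wp k g Q x = Wplus k g Q x"
proof (cases "Wplus k g Q x = 1")
  case True
  then have ordered: "\<forall>p\<in>Q. g p < x (k - 1, p) \<and> (\<forall>j. j + 1 < k \<longrightarrow> x (j + 1, p) < x (j, p))"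
    unfolding Wplus_def by (auto split: if_splits)
  have "g p < x (j, p)" if "p \<in> Q" "j < k" for p j
  proof -
    have "antimono_on {..<k} (\<lambda>j. x (j, p))"
      using ordered that(1) by (intro antimono_on_lessThanI) (simp add: less_imp_le)
    then have "x (k - 1, p) \<le> x (j, p)"
      using that(2) by (simp add: monotone_on_def)
    then show ?thesis
      using ordered that(1) by force
  qed
  then show ?thesis
    using True by (simp add: Wp_def)
qed (auto simp: Wplus_def)

definition bb_time :: "real \<Rightarrow> real \<Rightarrow> real list \<Rightarrow> nat \<Rightarrow> real" where
  "bb_time l r ps i = ([l] @ ps @ [r]) ! i"

definition bb_value :: "(nat \<Rightarrow> real) \<Rightarrow> (nat \<Rightarrow> real) \<Rightarrow> real list \<Rightarrow> (nat \<times> real \<Rightarrow> real)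
    \<Rightarrow> nat \<Rightarrow> nat \<Rightarrow> real" where
  "bb_value am ap ps x j i = ([am j] @ map (\<lambda>p. x (j, p)) ps @ [ap j]) ! i"

lemma bb_dens_eq:
  "bb_dens k l r am ap ps x =
    (\<Prod>j<k. (\<Prod>i<length ps + 1. heat (bb_time l r ps (Suc i) - bb_time l r ps i)
        (bb_value am ap ps x j i) (bb_value am ap ps x j (Suc i))) / heat (r - l) (am j) (ap j))"
  unfolding bb_dens_def bb_time_def bb_value_def Let_def ..

lemma bb_value_eq:
  assumes "i \<le> length ps + 1"
  shows "bb_value am ap ps x j i = (if i = 0 then am j else if i \<le> length ps then x (j, ps ! (i - 1)) else ap j)"
  using assms by (auto simp: bb_value_def nth_append nth_Cons' le_Suc_eq)

lemma bb_time_less: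
  assumes "sorted_wrt (<) ps" "set ps \<subseteq> {l<..<r}" "l < r" "i \<le> length ps"
  shows "bb_time l r ps i < bb_time l r ps (Suc i)"
proof -
  have "sorted_wrt (<) ([l] @ ps @ [r])"
    using assms(1-3) by (auto simp: sorted_wrt_append)
  then show ?thesis
    unfolding bb_time_def by (rule sorted_wrt_nth_less) (use assms(4) in auto)
qed

locale bridge_marginals =
  fixes k :: nat and l r :: real and am ap :: "nat \<Rightarrow> real" and Q :: "real set"
  assumes k_pos: "0 < k"
    and finite_Q: "finite Q" and Q_ne: "Q \<noteq> {}" and Q_sub: "Q \<subseteq> {l<..<r}"
    and am_antimono: "antimono_on {..<k} am" and ap_antimono: "antimono_on {..<k} ap"
begin

abbreviation "ps \<equiv> sorted_list_of_set Q"
abbreviation "n \<equiv> card Q"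
abbreviation "t \<equiv> bb_time l r ps"
abbreviation "v \<equiv> bb_value am ap ps"
abbreviation "dens \<equiv> bb_dens k l r am ap ps"

definition "coords = {0..<k} \<times> Q"

abbreviation "M \<equiv> PiM coords (\<lambda>_. lborel :: real measure)"

lemma coord_measurable[measurable]: "(\<lambda>x. x i) \<in> borel_measurable M"
  by (rule measurable_PiM_lborel_component)

definition relabel :: "(real \<Rightarrow> nat \<Rightarrow> nat) \<Rightarrow> (nat \<times> real \<Rightarrow> real) \<Rightarrow> nat \<times> real \<Rightarrow> real" where
  "relabel \<pi> x = (\<lambda>i\<in>coords. x (\<pi> (snd i) (fst i), snd i))"

lemma l_less_r: "l < r"
  using Q_ne Q_sub by fastforce

lemma length_ps: "length ps = n"
  by simp

lemma ps_in_Q: "i < n \<Longrightarrow> ps ! i \<in> Q"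
  using finite_Q nth_mem[of i ps] by simp

lemma n_pos: "0 < n"
  using finite_Q Q_ne by (simp add: card_gt_0_iff)

lemma finite_coords: "finite coords"
  by (simp add: coords_def finite_Q)

lemma t_step: "i \<le> n \<Longrightarrow> t i < t (Suc i)"
  using bb_time_less[of ps l r i] finite_Q Q_sub l_less_r by simp

lemma t_first: "t 0 = l" and t_last: "t (Suc n) = r"
  by (simp_all add: bb_time_def nth_append)

lemma dens_eq_steps:
  "dens x = (\<Prod>i<n + 1. \<Prod>j<k. heat (t (Suc i) - t i) (v x j i) (v x j (Suc i)))
      / (\<Prod>j<k. heat (r - l) (am j) (ap j))"
  unfolding bb_dens_eq prod_dividef length_ps by (subst prod.swap) simp

lemma dens_pos: "dens x > 0"
  unfolding bb_dens_eq using t_step l_less_r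
  by (intro prod_pos divide_pos_pos) (auto intro: heat_pos)

lemma v_measurable: "(\<lambda>x. v x j i) \<in> borel_measurable M" if "i \<le> n + 1"
  using that by (simp add: bb_value_eq)

lemma dens_measurable: "dens \<in> borel_measurable M"
  unfolding bb_dens_eq length_ps
  by (intro borel_measurable_prod borel_measurable_divide borel_measurable_heat v_measurable
      borel_measurable_const) auto

definition node_perm :: "(real \<Rightarrow> nat \<Rightarrow> nat) \<Rightarrow> nat \<Rightarrow> nat \<Rightarrow> nat" where
  "node_perm \<pi> i = (if 0 < i \<and> i \<le> n then \<pi> (ps ! (i - 1)) else id)"

lemma node_perm_permutes:
  assumes "\<And>p. p \<in> Q \<Longrightarrow> \<pi> p permutes {..<k}"
  shows "node_perm \<pi> i permutes {..<k}"
  using assms ps_in_Q[of "i - 1"] by (auto simp: node_perm_def permutes_id)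

lemma v_relabel:
  assumes "\<And>p. p \<in> Q \<Longrightarrow> \<pi> p permutes {..<k}" "i \<le> n + 1" "j < k"
  shows "v (relabel \<pi> x) j i = v x (node_perm \<pi> i j) i"
  using assms(2,3) ps_in_Q[of "i - 1"] permutes_in_image[OF assms(1)[of "ps ! (i - 1)"], of j]
  by (auto simp: bb_value_eq relabel_def coords_def node_perm_def)

lemma v_node_perm_antimono:
  assumes "\<And>p. p \<in> Q \<Longrightarrow> antimono_on {..<k} (\<lambda>j. x (\<pi> p j, p))" "i \<le> n + 1"
  shows "antimono_on {..<k} (\<lambda>j. v x (node_perm \<pi> i j) i)"
proof -
  consider "i = 0" | "0 < i" "i \<le> n" | "i = n + 1"
    using assms(2) by linarith
  then show ?thesis
  proof cases
    case 1
    then show ?thesis using am_antimono by (simp add: node_perm_def bb_value_eq)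
  next
    case 2
    then show ?thesis
      using assms(1)[OF ps_in_Q[of "i - 1"]] by (simp add: node_perm_def bb_value_eq)
  next
    case 3
    then show ?thesis using ap_antimono by (simp add: node_perm_def bb_value_eq)
  qed
qed

lemma dens_le_relabel:
  assumes perm: "\<And>p. p \<in> Q \<Longrightarrow> \<pi> p permutes {..<k}"
    and sorted: "\<And>p. p \<in> Q \<Longrightarrow> antimono_on {..<k} (\<lambda>j. x (\<pi> p j, p))"
  shows "dens x \<le> dens (relabel \<pi> x)"
proof -
  have step: "(\<Prod>j<k. heat (t (Suc i) - t i) (v x j i) (v x j (Suc i)))
      \<le> (\<Prod>j<k. heat (t (Suc i) - t i) (v (relabel \<pi> x) j i) (v (relabel \<pi> x) j (Suc i)))"
    if "i < n + 1" for i
  proof -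
    note sorted_sq = sum_sq_diff_sorted_le[OF node_perm_permutes[OF perm] node_perm_permutes[OF perm]
        v_node_perm_antimono[OF sorted] v_node_perm_antimono[OF sorted]]
    have "(\<Prod>j<k. heat (t (Suc i) - t i) (v x j i) (v x j (Suc i)))
        \<le> (\<Prod>j<k. heat (t (Suc i) - t i) (v x (node_perm \<pi> i j) i) (v x (node_perm \<pi> (Suc i) j) (Suc i)))"
      using that t_step[of i] by (intro prod_heat_antimono sorted_sq) simp_all
    also have "\<dots> = (\<Prod>j<k. heat (t (Suc i) - t i) (v (relabel \<pi> x) j i) (v (relabel \<pi> x) j (Suc i)))"
      using that by (intro prod.cong) (simp_all add: v_relabel[OF perm])
    finally show ?thesis .
  qed
  have "(\<Prod>i<n + 1. \<Prod>j<k. heat (t (Suc i) - t i) (v x j i) (v x j (Suc i)))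
      \<le> (\<Prod>i<n + 1. \<Prod>j<k. heat (t (Suc i) - t i) (v (relabel \<pi> x) j i) (v (relabel \<pi> x) j (Suc i)))"
    by (rule prod_mono) (use step t_step in \<open>auto intro!: prod_nonneg less_imp_le[OF heat_pos]\<close>)
  then show ?thesis
    unfolding dens_eq_steps
    by (rule divide_right_mono) (use l_less_r in \<open>auto intro!: prod_nonneg less_imp_le[OF heat_pos]\<close>)
qed

lemma Wp_measurable: "Wp k g Q \<in> borel_measurable M"
  using finite_Q unfolding Wp_def[abs_def] by measurable

lemma Wplus_measurable: "Wplus k g Q \<in> borel_measurable M"
  using finite_Q unfolding Wplus_def[abs_def] by measurable

lemma bij_betw_relabel_coord:
  assumes "\<And>p. p \<in> Q \<Longrightarrow> \<pi> p permutes {..<k}"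
  shows "bij_betw (\<lambda>i. (\<pi> (snd i) (fst i), snd i)) coords coords"
proof (rule bij_betwI[where g = "\<lambda>i. (inv (\<pi> (snd i)) (fst i), snd i)"])
  show "(\<lambda>i. (\<pi> (snd i) (fst i), snd i)) \<in> coords \<rightarrow> coords"
    using assms permutes_in_image by (fastforce simp: coords_def)
  show "(\<lambda>i. (inv (\<pi> (snd i)) (fst i), snd i)) \<in> coords \<rightarrow> coords"
    using assms permutes_in_image permutes_inv by (fastforce simp: coords_def)
qed (auto simp: coords_def permutes_inverses[OF assms])

lemma nn_integral_relabel:
  assumes "\<And>p. p \<in> Q \<Longrightarrow> \<pi> p permutes {..<k}" "f \<in> borel_measurable M"
  shows "(\<integral>\<^sup>+ x. f (relabel \<pi> x) \<partial>M) = (\<integral>\<^sup>+ x. f x \<partial>M)"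
  unfolding relabel_def
  by (rule nn_integral_PiM_reindex_bij[OF _ finite_coords bij_betw_relabel_coord[of \<pi>, OF assms(1)] assms(2)])
    unfold_locales

lemma relabel_measurable:
  assumes "\<And>p. p \<in> Q \<Longrightarrow> \<pi> p permutes {..<k}"
  shows "relabel \<pi> \<in> M \<rightarrow>\<^sub>M M"
  using bij_betwE[OF bij_betw_relabel_coord[of \<pi>, OF assms]] unfolding relabel_def
  by (intro measurable_restrict measurable_component_singleton) auto

lemma AE_no_ties: "AE x in M. \<forall>p\<in>Q. inj_on (\<lambda>j. x (j, p)) {..<k}"
proof -
  have "AE x in M. \<forall>(a, b, p)\<in>{..<k} \<times> {..<k} \<times> Q. a \<noteq> b \<longrightarrow> x (a, p) \<noteq> x (b, p)"
    using finite_Q by (intro AE_finite_allI) (auto intro!: AE_PiM_lborel_neq finite_coords simp: coords_def)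
  then show ?thesis
    by (rule AE_mp) (auto simp: inj_on_def intro!: AE_I2)
qed

lemma prod_heat_curve_le:
  "(\<Prod>i<n + 1. heat (t (Suc i) - t i) (v x j i) (v x j (Suc i)))
    \<le> sqrt (2 * pi * (real n * (r - l))) ^ n / (\<Prod>i<n + 1. sqrt (2 * pi * (t (Suc i) - t i)))
      * (\<Prod>p\<in>Q. heat (real n * (r - l)) (am j) (x (j, p)))"
proof -
  have "(\<Prod>i<n. heat (real n * (r - l)) (v x j 0) (v x j (Suc i)))
      = (\<Prod>i<n. heat (real n * (r - l)) (am j) (x (j, ps ! i)))"
    by (intro prod.cong) (simp_all add: bb_value_eq)
  also have "\<dots> = (\<Prod>p\<in>Q. heat (real n * (r - l)) (am j) (x (j, p)))"
    using prod.reindex_bij_betw[OF bij_betw_nth[of ps "{..<n}" Q]] finite_Q by simp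
  finally show ?thesis
    using prod_heat_chain_le[of n t "v x j", OF t_step n_pos] by (simp add: t_first t_last)
qed

lemma dens_le_gaussian:
  obtains K where "\<And>x. dens x \<le> K * (\<Prod>i\<in>coords. heat (real n * (r - l)) (am (fst i)) (x i))"
proof -
  define s where "s = real n * (r - l)"
  define c where "c = sqrt (2 * pi * s) ^ n / (\<Prod>i<n + 1. sqrt (2 * pi * (t (Suc i) - t i)))"
  have "dens x \<le> (\<Prod>j<k. c / heat (r - l) (am j) (ap j)) * (\<Prod>i\<in>coords. heat s (am (fst i)) (x i))"
    for x
  proof -
    have "dens x \<le> (\<Prod>j<k. c * (\<Prod>p\<in>Q. heat s (am j) (x (j, p))) / heat (r - l) (am j) (ap j))"
      unfolding bb_dens_eq length_ps
    proof (rule prod_mono, intro conjI divide_right_mono divide_nonneg_pos)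
      fix j
      show "0 \<le> (\<Prod>i<n + 1. heat (t (Suc i) - t i) (v x j i) (v x j (Suc i)))"
        using t_step by (intro prod_nonneg) (simp add: less_imp_le[OF heat_pos])
      show "(\<Prod>i<n + 1. heat (t (Suc i) - t i) (v x j i) (v x j (Suc i)))
          \<le> c * (\<Prod>p\<in>Q. heat s (am j) (x (j, p)))"
        unfolding c_def s_def by (rule prod_heat_curve_le)
    qed (use l_less_r in \<open>auto intro: heat_pos less_imp_le[OF heat_pos]\<close>)
    also have "\<dots> = (\<Prod>j<k. c / heat (r - l) (am j) (ap j)) * (\<Prod>i\<in>coords. heat s (am (fst i)) (x i))"
      by (simp add: coords_def prod.distrib prod.cartesian_product atLeast0LessThan
          case_prod_beta prod_dividef)
    finally show ?thesis .
  qed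
  then show ?thesis
    using that unfolding s_def by blast
qed

lemma nn_integral_dens_finite: "(\<integral>\<^sup>+ x. ennreal (dens x) \<partial>M) < \<infinity>"
proof -
  interpret product_sigma_finite "\<lambda>_ :: nat \<times> real. lborel :: real measure" ..
  define s where "s = real n * (r - l)"
  have "s > 0"
    using n_pos l_less_r by (simp add: s_def)
  obtain K where K: "\<And>x. dens x \<le> K * (\<Prod>i\<in>coords. heat s (am (fst i)) (x i))"
    using dens_le_gaussian unfolding s_def by blast
  have "(\<integral>\<^sup>+ x. ennreal (dens x) \<partial>M) \<le> (\<integral>\<^sup>+ x. ennreal K * (\<Prod>i\<in>coords. ennreal (heat s (am (fst i)) (x i))) \<partial>M)"
  proof (rule nn_integral_mono)
    fix x
    have "0 \<le> (\<Prod>i\<in>coords. heat s (am (fst i)) (x i))"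
      using \<open>s > 0\<close> by (intro prod_nonneg) (simp add: less_imp_le[OF heat_pos])
    then show "ennreal (dens x) \<le> ennreal K * (\<Prod>i\<in>coords. ennreal (heat s (am (fst i)) (x i)))"
      using K[of x] \<open>s > 0\<close>
      by (simp add: ennreal_mult''[symmetric] prod_ennreal less_imp_le[OF heat_pos] ennreal_leI)
  qed
  also have "\<dots> = ennreal K * (\<Prod>i\<in>coords. \<integral>\<^sup>+ y. ennreal (heat s (am (fst i)) y) \<partial>lborel)"
  proof -
    have "(\<lambda>y. ennreal (heat s a y)) \<in> borel_measurable lborel" for a
      using borel_measurable_heat[of "\<lambda>_. a" lborel "\<lambda>y. y" s] by simp
    moreover have "(\<lambda>x. \<Prod>i\<in>coords. ennreal (heat s (am (fst i)) (x i))) \<in> borel_measurable M"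
      unfolding heat_def by measurable
    ultimately show ?thesis
      using product_nn_integral_prod[OF finite_coords, of "\<lambda>i y. ennreal (heat s (am (fst i)) y)"]
      by (simp add: nn_integral_cmult)
  qed
  also have "\<dots> = ennreal K"
    using \<open>s > 0\<close> by (simp add: nn_integral_heat)
  finally show ?thesis
    using order_le_less_trans by fastforce
qed

definition "labelings = Pi\<^sub>E Q (\<lambda>_. {\<sigma>. \<sigma> permutes {..<k}})"

lemma finite_labelings: "finite labelings"
  unfolding labelings_def using finite_Q by (intro finite_PiE finite_permutations) auto

lemma card_labelings: "card labelings = fact k ^ n"
  unfolding labelings_def using finite_Q by (simp add: card_PiE card_permutations)

lemma sorting_labeling_exists:
  fixes x :: "nat \<times> real \<Rightarrow> real"
  assumes "\<forall>p\<in>Q. inj_on (\<lambda>j. x (j, p)) {..<k}"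
  obtains \<pi> where "\<pi> \<in> labelings" "\<And>p. p \<in> Q \<Longrightarrow> strict_antimono_on {..<k} (\<lambda>j. x (\<pi> p j, p))"
proof -
  have "\<exists>\<sigma>. \<sigma> permutes {..<k} \<and> strict_antimono_on {..<k} (\<lambda>j. x (\<sigma> j, p))" if "p \<in> Q" for p
  proof -
    have "inj_on (\<lambda>j. x (j, p)) {..<k}"
      using assms that by blast
    then obtain \<sigma> where "\<sigma> permutes {..<k}" "strict_antimono_on {..<k} ((\<lambda>j. x (j, p)) \<circ> \<sigma>)"
      by (rule sorting_permutation_exists)
    then show ?thesis
      unfolding comp_def by blast
  qed
  then obtain \<pi> where \<pi>: "\<And>p. p \<in> Q \<Longrightarrow> \<pi> p permutes {..<k} \<and> strict_antimono_on {..<k} (\<lambda>j. x (\<pi> p j, p))"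
    by metis
  show ?thesis
    by (rule that[of "restrict \<pi> Q"]) (simp_all add: \<pi> labelings_def)
qed

lemma Wplus_relabel_sorted:
  assumes "\<pi> \<in> labelings" "\<And>p. p \<in> Q \<Longrightarrow> strict_antimono_on {..<k} (\<lambda>j. x (\<pi> p j, p))"
    and "Wp k g Q x = 1"
  shows "Wplus k g Q (relabel \<pi> x) = 1"
proof -
  have relabel_at: "relabel \<pi> x (j, p) = x (\<pi> p j, p)" if "j < k" "p \<in> Q" for j p
    using that by (simp add: relabel_def coords_def)
  have "g p < relabel \<pi> x (k - 1, p)" if "p \<in> Q" for p
    using that k_pos assms(1,3) permutes_in_image[of "\<pi> p" "{..<k}" "k - 1"]
    by (auto simp: relabel_at labelings_def Wp_def split: if_splits)
  moreover have "relabel \<pi> x (j + 1, p) < relabel \<pi> x (j, p)" if "p \<in> Q" "j + 1 < k" for p j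
    using that assms(2)[OF that(1)] by (simp add: relabel_at monotone_on_def)
  ultimately show ?thesis
    by (simp add: Wplus_def)
qed

lemma Wp_dens_le_sum_relabel:
  assumes "\<forall>p\<in>Q. inj_on (\<lambda>j. x (j, p)) {..<k}"
  shows "ennreal (Wp k g Q x * dens x)
    \<le> (\<Sum>\<pi>\<in>labelings. ennreal (Wplus k g Q (relabel \<pi> x) * dens (relabel \<pi> x)))"
proof (cases "Wp k g Q x = 1")
  case True
  obtain \<pi> where \<pi>: "\<pi> \<in> labelings" "\<And>p. p \<in> Q \<Longrightarrow> strict_antimono_on {..<k} (\<lambda>j. x (\<pi> p j, p))"
    using sorting_labeling_exists[OF assms] by blast
  then have "dens x \<le> dens (relabel \<pi> x)"
    by (intro dens_le_relabel) (auto simp: labelings_def strict_antimono_iff_antimono)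
  then have "ennreal (Wp k g Q x * dens x) \<le> ennreal (Wplus k g Q (relabel \<pi> x) * dens (relabel \<pi> x))"
    using True Wplus_relabel_sorted[OF \<pi> True] by (simp add: ennreal_leI)
  also have "\<dots> \<le> (\<Sum>\<pi>\<in>labelings. ennreal (Wplus k g Q (relabel \<pi> x) * dens (relabel \<pi> x)))"
    using \<pi>(1) finite_labelings by (intro member_le_sum) auto
  finally show ?thesis .
qed (auto simp: Wp_def)

lemma nn_integral_Wp_le:
  "(\<integral>\<^sup>+ x. ennreal (Wp k g Q x * dens x) \<partial>M)
    \<le> of_nat (fact k ^ n) * (\<integral>\<^sup>+ x. ennreal (Wplus k g Q x * dens x) \<partial>M)"
proof -
  have labeling_perm: "\<pi> p permutes {..<k}" if "\<pi> \<in> labelings" "p \<in> Q" for \<pi> p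
    using that by (auto simp: labelings_def)
  have Wplus_dens_measurable: "(\<lambda>x. ennreal (Wplus k g Q x * dens x)) \<in> borel_measurable M"
    using Wplus_measurable dens_measurable by measurable
  have "(\<integral>\<^sup>+ x. ennreal (Wp k g Q x * dens x) \<partial>M)
      \<le> (\<integral>\<^sup>+ x. (\<Sum>\<pi>\<in>labelings. ennreal (Wplus k g Q (relabel \<pi> x) * dens (relabel \<pi> x))) \<partial>M)"
    using AE_no_ties by (rule nn_integral_mono_AE[OF AE_mp]) (auto intro: Wp_dens_le_sum_relabel)
  also have "\<dots> = (\<Sum>\<pi>\<in>labelings. \<integral>\<^sup>+ x. ennreal (Wplus k g Q (relabel \<pi> x) * dens (relabel \<pi> x)) \<partial>M)"
    using measurable_compose[OF relabel_measurable Wplus_dens_measurable] labeling_perm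
    by (intro nn_integral_sum) auto
  also have "\<dots> = (\<Sum>\<pi>\<in>labelings. \<integral>\<^sup>+ x. ennreal (Wplus k g Q x * dens x) \<partial>M)"
    using labeling_perm by (intro sum.cong nn_integral_relabel Wplus_dens_measurable) auto
  also have "\<dots> = of_nat (fact k ^ n) * (\<integral>\<^sup>+ x. ennreal (Wplus k g Q x * dens x) \<partial>M)"
    by (simp add: card_labelings)
  finally show ?thesis .
qed

lemma nn_integral_Wp_pos: "(\<integral>\<^sup>+ x. ennreal (Wp k g Q x * dens x) \<partial>M) \<noteq> 0"
proof
  interpret product_sigma_finite "\<lambda>_ :: nat \<times> real. lborel :: real measure" ..
  define S where "S = {x \<in> space M. ennreal (Wp k g Q x * dens x) \<noteq> 0}"
  define box where "box = Pi\<^sub>E coords (\<lambda>i. {g (snd i) <.. g (snd i) + 1})"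
  assume "(\<integral>\<^sup>+ x. ennreal (Wp k g Q x * dens x) \<partial>M) = 0"
  then have "emeasure M S = 0"
    unfolding S_def using Wp_measurable dens_measurable by (subst nn_integral_0_iff[symmetric]) auto
  have "ennreal (dens x) \<noteq> 0" for x
    using dens_pos[of x] by simp
  then have "box \<subseteq> S"
    by (auto simp: S_def box_def coords_def space_PiM PiE_iff Wp_def)
  moreover have "S \<in> sets M"
    unfolding S_def using Wp_measurable dens_measurable by measurable
  moreover have "emeasure M box = 1"
    unfolding box_def by (simp add: emeasure_PiM finite_coords)
  ultimately show False
    using emeasure_mono[of box S M] \<open>emeasure M S = 0\<close> by simp
qed

theorem E_L_Wplus_ge: "E_L k l r am ap g Q (Wplus k g Q) \<ge> 1 / fact k ^ n"
proof -
  define A where "A = (\<integral>\<^sup>+ x. ennreal (Wplus k g Q x * dens x) \<partial>M)"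
  define B where "B = (\<integral>\<^sup>+ x. ennreal (Wp k g Q x * dens x) \<partial>M)"
  have E_L_eq: "E_L k l r am ap g Q (Wplus k g Q) = enn2real A / enn2real B"
    by (simp add: E_L_def E_free_def Wplus_mult_Wp A_def B_def coords_def)
  have "B \<le> (\<integral>\<^sup>+ x. ennreal (dens x) \<partial>M)"
    unfolding B_def using dens_pos by (intro nn_integral_mono) (simp add: Wp_def less_imp_le)
  then have "B < \<infinity>"
    using nn_integral_dens_finite by order
  moreover have "B \<noteq> 0"
    unfolding B_def by (rule nn_integral_Wp_pos)
  ultimately have B_pos: "0 < enn2real B"
    by (simp add: enn2real_positive_iff zero_less_iff_neq_zero)
  have "Wplus k g Q x \<le> Wp k g Q x" for x
    using Wplus_mult_Wp[of k g Q x] by (auto simp: Wplus_def Wp_def split: if_splits)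
  then have "A \<le> B"
    unfolding A_def B_def using dens_pos
    by (intro nn_integral_mono ennreal_leI mult_right_mono) (auto intro: less_imp_le)
  have "enn2real B \<le> enn2real (of_nat (fact k ^ n) * A)"
    using \<open>A \<le> B\<close> \<open>B < \<infinity>\<close> of_nat_less_top[of "fact k ^ n"] unfolding A_def B_def
    by (intro enn2real_mono nn_integral_Wp_le) (auto simp: ennreal_mult_less_top of_nat_less_top)
  also have "\<dots> = fact k ^ n * enn2real A"
    by (simp add: enn2real_mult del: of_nat_fact of_nat_power) simp
  finally have "enn2real B \<le> fact k ^ n * enn2real A" .
  then show ?thesis
    unfolding E_L_eq using B_pos by (simp add: field_simps)
qed

corollary E_L_Wplus_ge_exp:
  assumes "real n \<le> b * T" "0 \<le> T" "0 \<le> b"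
  defines "C \<equiv> 1 + b * ln (fact k)"
  shows "exp (- C * T) / C \<le> E_L k l r am ap g Q (Wplus k g Q)"
proof -
  have "C \<ge> 1"
    using assms(3) by (simp add: C_def)
  have "real n * ln (fact k) \<le> b * T * ln (fact k)"
    using assms(1) by (intro mult_right_mono) simp_all
  then have "exp (- C * T) \<le> exp (- (real n * ln (fact k)))"
    using assms(2) by (simp add: C_def algebra_simps)
  also have "\<dots> = 1 / fact k ^ n"
    by (simp add: exp_minus exp_of_nat_mult[symmetric] ln_realpow[symmetric] divide_inverse)
  also have "\<dots> \<le> E_L k l r am ap g Q (Wplus k g Q)"
    by (rule E_L_Wplus_ge)
  finally have "exp (- C * T) \<le> E_L k l r am ap g Q (Wplus k g Q)" .
  moreover have "exp (- C * T) / C \<le> exp (- C * T)"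
    using \<open>C \<ge> 1\<close> by (simp add: divide_le_eq mult_le_cancel_left1)
  ultimately show ?thesis
    by linarith
qed

end

theorem mainTheorem7:
  fixes k :: nat and b0 b1 lam0 lam1 :: real
  assumes "k \<ge> 1" and "b0 > 0" and "b1 > 0" and "lam0 > 0" and "lam1 > 0"
  shows "\<exists>C>0. \<forall>b2>0. \<forall>(T::real) (l::real) (r::real) (am::nat \<Rightarrow> real) (ap::nat \<Rightarrow> real)
           (g::real \<Rightarrow> real) (P::real set).
     T \<ge> 10 \<and> l < r \<and> finite P \<and> P \<subseteq> {l<..<r} \<and>
     P \<inter> {l + sqrt T .. r - sqrt T} \<noteq> {} \<and>
     g l = 0 \<and> g r = 0 \<and>
     r - l \<le> b0 * T \<and> real (card P) \<le> b0 * T \<and>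
     (\<forall>x\<in>{l..r}. \<forall>y\<in>{l..r}. \<bar>g x - g y\<bar> \<le> b1 * T * \<bar>x - y\<bar>) \<and>
     (\<forall>j. j + 1 < k \<longrightarrow> am j - am (j + 1) \<ge> lam0 * sqrt T \<and> ap j - ap (j + 1) \<ge> lam0 * sqrt T) \<and>
     am (k - 1) - g l \<ge> lam1 * T \<and> ap (k - 1) - g r \<ge> lam1 * T \<and>
     am 0 - g l \<le> b2 * T^2 \<and> ap 0 - g r \<le> b2 * T^2
     \<longrightarrow> E_L k l r am ap g (P \<inter> {l + sqrt T .. r - sqrt T})
            (Wplus k g (P \<inter> {l + sqrt T .. r - sqrt T})) \<ge> exp (- C * T) / C"
proof -
  define C where "C = 1 + b0 * ln (fact k)"
  have "exp (- C * T) / C \<le> E_L k l r am ap g Q (Wplus k g Q)"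
    if "T \<ge> 10" "finite P" "P \<subseteq> {l<..<r}" "Q = P \<inter> {l + sqrt T .. r - sqrt T}" "Q \<noteq> {}"
      "real (card P) \<le> b0 * T"
      and gaps: "\<forall>j. j + 1 < k \<longrightarrow> am j - am (j + 1) \<ge> lam0 * sqrt T \<and> ap j - ap (j + 1) \<ge> lam0 * sqrt T"
    for T l r P Q am ap and g :: "real \<Rightarrow> real"
  proof -
    have "0 < lam0 * sqrt T"
      using assms(4) that(1) by simp
    then have "antimono_on {..<k} am" "antimono_on {..<k} ap"
      using gaps by (auto intro!: antimono_on_lessThanI)
    then interpret bridge_marginals k l r am ap Q
      using that assms(1) by unfold_locales auto
    have "real (card Q) \<le> b0 * T"
      using card_mono[of P Q] that by force
    then show ?thesis
      unfolding C_def using that(1) assms(2) by (intro E_L_Wplus_ge_exp) simp_all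
  qed
  moreover have "C > 0"
    using assms(2) by (simp add: C_def add_pos_nonneg)
  ultimately show ?thesis
    by (intro exI[of _ C]) auto
qed

end
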